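(* Let $n\ge1$ and let $T\in\mathcal{L}(\mathcal{H})$ be $n$-EP. Then $T$ has finite ascent and finite descent, and moreover $\mathrm{asc}(T)\le n$ and $\mathrm{dsc}(T)\le n$.
   Context: $\mathcal{H}$ is a Hilbert space, $\mathcal{L}(\mathcal{H})$ the bounded operators on it; $N(\cdot)$ and $R(\cdot)$ denote kernel and range. The ascent is $\mathrm{asc}(T)=\min\{k\in\mathbb{N}: N(T^k)=N(T^{k+1})\}$ and the descent is $\mathrm{dsc}(T)=\min\{k\in\mathbb{N}: R(T^k)=R(T^{k+1})\}$ (each is $\infty$ if no such $k$ exists). For $T$ with closed range, $T^\dagger$ is its Moore–Penrose inverse (unique solution of $TT^\dagger T=T$, $T^\dagger TT^\dagger=T^\dagger$, $(T^\dagger T)^*=T^\dagger T$, $(TT^\dagger)^*=TT^\dagger$). $T$ is $n$-EP if it has closed range and $T^nT^\dagger=T^\dagger T^n$. *)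

theory Defs
  imports "HOL-Analysis.Analysis" "HOL-Library.Extended_Nat"
begin

definition op_pow :: "('a::real_normed_vector \<Rightarrow>\<^sub>L 'a) \<Rightarrow> nat \<Rightarrow> 'a \<Rightarrow> 'a" where
  "op_pow T k = (blinfun_apply T ^^ k)"

definition kernel_op :: "('a::real_normed_vector \<Rightarrow> 'a) \<Rightarrow> 'a set" where
  "kernel_op f = {x. f x = 0}"

definition ascent :: "('a::real_normed_vector \<Rightarrow>\<^sub>L 'a) \<Rightarrow> enat" where
  "ascent T = (if \<exists>k. kernel_op (op_pow T k) = kernel_op (op_pow T (Suc k))
     then enat (LEAST k. kernel_op (op_pow T k) = kernel_op (op_pow T (Suc k))) else \<infinity>)"

definition descent :: "('a::real_normed_vector \<Rightarrow>\<^sub>L 'a) \<Rightarrow> enat" where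
  "descent T = (if \<exists>k. range (op_pow T k) = range (op_pow T (Suc k))
     then enat (LEAST k. range (op_pow T k) = range (op_pow T (Suc k))) else \<infinity>)"

definition is_mp_inverse :: "('a::real_inner \<Rightarrow>\<^sub>L 'a) \<Rightarrow> ('a \<Rightarrow>\<^sub>L 'a) \<Rightarrow> bool" where
  "is_mp_inverse T S \<longleftrightarrow>
     T o\<^sub>L S o\<^sub>L T = T \<and> S o\<^sub>L T o\<^sub>L S = S \<and>
     adjoint (blinfun_apply (S o\<^sub>L T)) = blinfun_apply (S o\<^sub>L T) \<and>
     adjoint (blinfun_apply (T o\<^sub>L S)) = blinfun_apply (T o\<^sub>L S)"

definition mp_inverse :: "('a::real_inner \<Rightarrow>\<^sub>L 'a) \<Rightarrow> ('a \<Rightarrow>\<^sub>L 'a)" where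
  "mp_inverse T = (THE S. is_mp_inverse T S)"

definition n_EP :: "nat \<Rightarrow> ('a::real_inner \<Rightarrow>\<^sub>L 'a) \<Rightarrow> bool" where
  "n_EP n T \<longleftrightarrow> closed (range (blinfun_apply T)) \<and>
     op_pow T n \<circ> blinfun_apply (mp_inverse T) = blinfun_apply (mp_inverse T) \<circ> op_pow T n"

end

theory Submission
  imports Defs
begin

text \<open>Let \<open>S\<close> be the Moore-Penrose inverse of \<open>T\<close>, so that \<open>T S T = T\<close> and, by the
  \<open>n\<close>-EP hypothesis, \<open>T\<^sup>n S = S T\<^sup>n\<close>. If \<open>T\<^bsup>n+1\<^esup> x = 0\<close> then
  \<open>T\<^sup>n x = T\<^bsup>n-1\<^esup> (T S T x) = T\<^sup>n (S T x) = S T\<^bsup>n+1\<^esup> x = 0\<close>, and for every \<open>x\<close>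
  \<open>T\<^bsup>n+1\<^esup> (S x) = T S T\<^sup>n x = T S T (T\<^bsup>n-1\<^esup> x) = T\<^sup>n x\<close>; hence
  \<open>N(T\<^sup>n) = N(T\<^bsup>n+1\<^esup>)\<close> and \<open>R(T\<^sup>n) = R(T\<^bsup>n+1\<^esup>)\<close>, which bounds ascent and descent by \<open>n\<close>.
  Most of the work lies in showing that a closed-range operator on a Hilbert space has a
  unique Moore-Penrose inverse. It is built from the orthogonal projections onto \<open>N(T)\<close> and
  \<open>R(T)\<close> together with a bounded right inverse on \<open>R(T)\<close>, which the Baire category theorem
  provides (bounded inverse theorem); uniqueness uses adjoints, i.e. the Riesz representation
  theorem.\<close>

section \<open>Absolutely summable series\<close>

(* Series.summable_norm_cancel is stated for the class banach, and the sort
   {real_normed_vector, complete_space} used throughout is not known to be contained in it. *)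
lemma summable_norm_cancel_complete:
  fixes f :: "nat \<Rightarrow> 'a::{real_normed_vector,complete_space}"
  assumes "summable (\<lambda>n. norm (f n))"
  shows "summable f"
proof (rule summable_bounded_partials)
  let ?S = "\<Sum>n. norm (f n)"
  have "(\<lambda>a. \<Sum>i<Suc a. norm (f i)) \<longlonglongrightarrow> ?S"
    using summable_LIMSEQ[OF assms] by (rule LIMSEQ_Suc)
  then have "(\<lambda>a. ?S - (\<Sum>i\<le>a. norm (f i))) \<longlonglongrightarrow> ?S - ?S"
    by (intro tendsto_diff tendsto_const) (simp add: lessThan_Suc_atMost)
  then show "(\<lambda>a. ?S - (\<Sum>i\<le>a. norm (f i))) \<longlonglongrightarrow> 0"
    by simp
  show "\<forall>\<^sub>F a0 in sequentially. \<forall>a\<ge>a0. \<forall>b>a. norm (sum f {a<..b}) \<le> ?S - (\<Sum>i\<le>a. norm (f i))"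
  proof (intro always_eventually allI impI)
    fix a b :: nat
    assume "a < b"
    have "norm (sum f {a<..b}) \<le> (\<Sum>i\<in>{a<..b}. norm (f i))"
      by (rule norm_sum)
    also have "\<dots> = (\<Sum>i\<le>b. norm (f i)) - (\<Sum>i\<le>a. norm (f i))"
    proof -
      have "{..b} - {..a} = {a<..b}"
        by auto
      then show ?thesis
        using sum_diff[of "{..b}" "{..a}" "\<lambda>i. norm (f i)"] \<open>a < b\<close> by simp
    qed
    also have "\<dots> \<le> ?S - (\<Sum>i\<le>a. norm (f i))"
      using sum_le_suminf[OF assms, of "{..b}"] by simp
    finally show "norm (sum f {a<..b}) \<le> ?S - (\<Sum>i\<le>a. norm (f i))" .
  qed
qed

lemma summable_geometrically_bounded:
  fixes u :: "nat \<Rightarrow> 'a::{real_normed_vector,complete_space}"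
  assumes bound: "\<And>j. norm (u j) \<le> c * (1/2) ^ j"
  shows "summable u" and "norm (suminf u) \<le> 2 * c"
proof -
  have geometric: "(\<lambda>j. c * (1/2::real) ^ j) sums (2 * c)"
    using sums_mult[OF geometric_sums[of "1/2::real"], of c] by (simp add: mult.commute)
  then have "summable (\<lambda>j. norm (u j))"
    by (rule summable_comparison_test'[OF sums_summable]) (use bound in simp)
  then show "summable u"
    by (rule summable_norm_cancel_complete)
  have "(\<lambda>n. norm (\<Sum>j<n. u j)) \<longlonglongrightarrow> norm (suminf u)"
    by (intro tendsto_norm summable_LIMSEQ \<open>summable u\<close>)
  moreover have "(\<lambda>n. \<Sum>j<n. c * (1/2::real) ^ j) \<longlonglongrightarrow> 2 * c"
    using geometric by (simp add: sums_def)
  moreover have "norm (\<Sum>j<n. u j) \<le> (\<Sum>j<n. c * (1/2) ^ j)" for n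
    by (rule order_trans[OF norm_sum sum_mono[OF bound]])
  ultimately show "norm (suminf u) \<le> 2 * c"
    by (intro LIMSEQ_le) auto
qed

section \<open>Orthogonal projections onto closed subspaces\<close>

lemma minimizing_sequence_Cauchy:
  fixes M :: "'a::real_inner set"
  assumes "subspace M" and m_in: "\<And>k. m k \<in> M" and d_le: "\<And>z. z \<in> M \<Longrightarrow> d \<le> norm (x - z)"
    and m_lim: "(\<lambda>k. norm (x - m k)) \<longlonglongrightarrow> d"
  shows "Cauchy m"
proof -
  have "d \<ge> 0"
    by (rule LIMSEQ_le_const[OF m_lim]) simp
  define e where "e k = (norm (x - m k))\<^sup>2 - d\<^sup>2" for k
  have e_lim: "e \<longlonglongrightarrow> 0"
  proof -
    have "(\<lambda>k. (norm (x - m k))\<^sup>2 - d\<^sup>2) \<longlonglongrightarrow> d\<^sup>2 - d\<^sup>2"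
      by (intro tendsto_intros m_lim)
    then show ?thesis
      unfolding e_def[abs_def] by simp
  qed
  \<comment> \<open>Parallelogram law, using that the midpoint of \<open>m i\<close> and \<open>m j\<close> lies in \<open>M\<close>.\<close>
  have m_diff_sq: "(norm (m i - m j))\<^sup>2 \<le> 2 * e i + 2 * e j" for i j
  proof -
    have "(1/2) *\<^sub>R (m i + m j) \<in> M"
      using assms(1) m_in by (simp add: subspace_add subspace_scale)
    then have "d \<le> norm (x - (1/2) *\<^sub>R (m i + m j))"
      by (rule d_le)
    also have "\<dots> = norm ((x - m i) + (x - m j)) / 2"
    proof -
      have "(x - m i) + (x - m j) = 2 *\<^sub>R (x - (1/2) *\<^sub>R (m i + m j))"
        by (simp add: algebra_simps scaleR_2)
      then show ?thesis
        by simp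
    qed
    finally have "(2 * d)\<^sup>2 \<le> (norm ((x - m i) + (x - m j)))\<^sup>2"
      using \<open>d \<ge> 0\<close> by (intro power_mono) auto
    moreover have "(norm ((x - m i) - (x - m j)))\<^sup>2 + (norm ((x - m i) + (x - m j)))\<^sup>2
        = 2 * (norm (x - m i))\<^sup>2 + 2 * (norm (x - m j))\<^sup>2"
      by (simp add: power2_norm_eq_inner algebra_simps inner_commute)
    moreover have "norm ((x - m i) - (x - m j)) = norm (m i - m j)"
      by (simp add: norm_minus_commute)
    ultimately show ?thesis
      by (simp add: e_def power_mult_distrib)
  qed
  show "Cauchy m"
  proof (rule CauchyI)
    fix \<epsilon> :: real
    assume "\<epsilon> > 0"
    then obtain N where N: "\<And>k. k \<ge> N \<Longrightarrow> e k < \<epsilon>\<^sup>2 / 4"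
      using order_tendstoD(2)[OF e_lim, of "\<epsilon>\<^sup>2 / 4"] by (auto simp: eventually_sequentially)
    have "norm (m i - m j) < \<epsilon>" if "i \<ge> N" "j \<ge> N" for i j
    proof -
      have "(norm (m i - m j))\<^sup>2 < \<epsilon>\<^sup>2"
        using m_diff_sq[of i j] N[OF that(1)] N[OF that(2)] by linarith
      then show ?thesis
        using \<open>\<epsilon> > 0\<close> by (simp add: power_less_imp_less_base)
    qed
    then show "\<exists>N. \<forall>i\<ge>N. \<forall>j\<ge>N. norm (m i - m j) < \<epsilon>"
      by blast
  qed
qed

lemma subspace_closest_point_exists:
  fixes M :: "'a::{real_inner,complete_space} set"
  assumes "subspace M" "closed M"
  obtains m where "m \<in> M" "\<And>z. z \<in> M \<Longrightarrow> norm (x - m) \<le> norm (x - z)"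
proof -
  define d where "d = infdist x M"
  have "M \<noteq> {}"
    using assms(1) subspace_0 by blast
  have d_le: "d \<le> norm (x - z)" if "z \<in> M" for z
    using infdist_le[OF that, of x] by (simp add: d_def dist_norm)
  have "\<exists>m\<in>M. norm (x - m) < d + inverse (Suc k)" for k
  proof -
    have "bdd_below ((\<lambda>a. dist x a) ` M)"
      by (rule bdd_belowI2[of _ 0]) simp
    moreover have "(INF a\<in>M. dist x a) < d + inverse (Suc k)"
      unfolding d_def infdist_notempty[OF \<open>M \<noteq> {}\<close>] by simp
    ultimately show ?thesis
      by (subst (asm) cINF_less_iff[OF \<open>M \<noteq> {}\<close>]) (auto simp: dist_norm)
  qed
  then obtain m where m_in: "\<And>k. m k \<in> M" and m_close: "\<And>k. norm (x - m k) < d + inverse (Suc k)"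
    by metis
  have m_lim: "(\<lambda>k. norm (x - m k)) \<longlonglongrightarrow> d"
  proof (rule tendsto_sandwich)
    show "\<forall>\<^sub>F k in sequentially. d \<le> norm (x - m k)"
      by (intro always_eventually allI d_le m_in)
    show "\<forall>\<^sub>F k in sequentially. norm (x - m k) \<le> d + inverse (real (Suc k))"
      by (intro always_eventually allI less_imp_le m_close)
    show "(\<lambda>k. d + inverse (real (Suc k))) \<longlonglongrightarrow> d"
      using tendsto_add[OF tendsto_const LIMSEQ_inverse_real_of_nat, of d] by simp
  qed simp
  obtain l where l: "m \<longlonglongrightarrow> l"
    using minimizing_sequence_Cauchy[OF assms(1) m_in d_le m_lim]
    by (auto simp: Cauchy_convergent_iff convergent_def)
  have "l \<in> M"
    using closed_sequentially[OF assms(2) m_in l] .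
  moreover have "norm (x - l) = d"
    using LIMSEQ_unique[OF tendsto_norm[OF tendsto_diff[OF tendsto_const l]] m_lim] .
  ultimately show ?thesis
    using d_le that by force
qed

lemma subspace_orthogonal_projection_exists:
  fixes M :: "'a::{real_inner,complete_space} set"
  assumes "subspace M" "closed M"
  shows "\<exists>m\<in>M. \<forall>z\<in>M. (x - m) \<bullet> z = 0"
proof -
  obtain m where "m \<in> M" and m_min: "\<And>z. z \<in> M \<Longrightarrow> norm (x - m) \<le> norm (x - z)"
    using subspace_closest_point_exists[OF assms] by blast
  have "(x - m) \<bullet> z = 0" if "z \<in> M" for z
  proof (cases "z = 0")
    case False
    define c where "c = (x - m) \<bullet> z"
    \<comment> \<open>Unless \<open>c = 0\<close>, moving \<open>m\<close> to \<open>m + t z\<close> would bring it closer to \<open>x\<close>.\<close>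
    define t where "t = c / (z \<bullet> z)"
    have "m + t *\<^sub>R z \<in> M"
      using assms(1) \<open>m \<in> M\<close> that by (simp add: subspace_add subspace_scale)
    then have "(norm (x - m))\<^sup>2 \<le> (norm ((x - m) - t *\<^sub>R z))\<^sup>2"
      using m_min by (simp add: diff_diff_eq power_mono)
    also have "\<dots> = (norm (x - m))\<^sup>2 - 2 * t * c + t * t * (z \<bullet> z)"
      by (simp add: power2_norm_eq_inner inner_diff_left inner_diff_right inner_commute c_def algebra_simps)
    also have "t * t * (z \<bullet> z) = t * c"
      using False by (simp add: t_def)
    finally have "c * c / (z \<bullet> z) \<le> 0"
      by (simp add: t_def)
    moreover have "z \<bullet> z > 0"
      using False by simp
    ultimately have "c * c \<le> 0"
      by (simp add: divide_le_0_iff)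
    then have "c * c = 0"
      using zero_le_square[of c] by linarith
    then show ?thesis
      by (simp add: c_def)
  qed simp
  with \<open>m \<in> M\<close> show ?thesis
    by blast
qed

(* Only meaningful for closed subspaces M; otherwise SOME may pick an arbitrary value. *)
definition orthogonal_projection :: "'a::real_inner set \<Rightarrow> 'a \<Rightarrow> 'a" where
  "orthogonal_projection M x = (SOME m. m \<in> M \<and> (\<forall>z\<in>M. (x - m) \<bullet> z = 0))"

context
  fixes M :: "'a::{real_inner,complete_space} set"
  assumes subspace_M: "subspace M" and closed_M: "closed M"
begin

lemma orthogonal_projection_in_orthogonal:
  "orthogonal_projection M x \<in> M \<and> (\<forall>z\<in>M. (x - orthogonal_projection M x) \<bullet> z = 0)"
  unfolding orthogonal_projection_def
  by (rule someI_ex) (use subspace_orthogonal_projection_exists[OF subspace_M closed_M] in blast)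

lemma orthogonal_projection_in: "orthogonal_projection M x \<in> M"
  using orthogonal_projection_in_orthogonal by blast

lemma orthogonal_projection_orthogonal: "z \<in> M \<Longrightarrow> (x - orthogonal_projection M x) \<bullet> z = 0"
  using orthogonal_projection_in_orthogonal by blast

lemma orthogonal_projection_unique:
  assumes "m \<in> M" "\<And>z. z \<in> M \<Longrightarrow> (x - m) \<bullet> z = 0"
  shows "orthogonal_projection M x = m"
proof -
  let ?d = "m - orthogonal_projection M x"
  have "?d \<in> M"
    using assms(1) orthogonal_projection_in subspace_M by (simp add: subspace_diff)
  have "?d \<bullet> ?d = (x - orthogonal_projection M x) \<bullet> ?d - (x - m) \<bullet> ?d"
    by (simp add: inner_diff_left)
  also have "\<dots> = 0"
    using orthogonal_projection_orthogonal[OF \<open>?d \<in> M\<close>] assms(2)[OF \<open>?d \<in> M\<close>] by simp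
  finally show ?thesis
    by simp
qed

lemma orthogonal_projection_id: "x \<in> M \<Longrightarrow> orthogonal_projection M x = x"
  by (rule orthogonal_projection_unique) auto

lemma orthogonal_projection_residual: "orthogonal_projection M (x - orthogonal_projection M x) = 0"
proof (rule orthogonal_projection_unique)
  show "0 \<in> M"
    by (rule subspace_0[OF subspace_M])
  show "(x - orthogonal_projection M x - 0) \<bullet> z = 0" if "z \<in> M" for z
    using orthogonal_projection_orthogonal[OF that] by simp
qed

lemma orthogonal_projection_pythagoras:
  "(norm x)\<^sup>2 = (norm (orthogonal_projection M x))\<^sup>2 + (norm (x - orthogonal_projection M x))\<^sup>2"
proof -
  let ?p = "orthogonal_projection M x"
  have "(x - ?p) \<bullet> ?p = 0"
    by (rule orthogonal_projection_orthogonal[OF orthogonal_projection_in])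
  then have "x \<bullet> ?p = ?p \<bullet> ?p"
    by (simp add: inner_diff_left)
  then show ?thesis
    by (simp add: power2_norm_eq_inner inner_diff_left inner_diff_right inner_commute)
qed

lemma norm_orthogonal_projection_le: "norm (orthogonal_projection M x) \<le> norm x"
proof (rule power2_le_imp_le)
  show "(norm (orthogonal_projection M x))\<^sup>2 \<le> (norm x)\<^sup>2"
    using orthogonal_projection_pythagoras[of x] zero_le_power2[of "norm (x - orthogonal_projection M x)"]
    by linarith
qed simp

lemma norm_orthogonal_projection_diff_le: "norm (x - orthogonal_projection M x) \<le> norm x"
proof (rule power2_le_imp_le)
  show "(norm (x - orthogonal_projection M x))\<^sup>2 \<le> (norm x)\<^sup>2"
    using orthogonal_projection_pythagoras[of x] zero_le_power2[of "norm (orthogonal_projection M x)"]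
    by linarith
qed simp

lemma bounded_linear_orthogonal_projection: "bounded_linear (orthogonal_projection M)"
proof (rule bounded_linear_intro[where K=1])
  show "orthogonal_projection M (x + y) = orthogonal_projection M x + orthogonal_projection M y" for x y
  proof (rule orthogonal_projection_unique)
    show "orthogonal_projection M x + orthogonal_projection M y \<in> M"
      using subspace_M orthogonal_projection_in by (simp add: subspace_add)
    show "(x + y - (orthogonal_projection M x + orthogonal_projection M y)) \<bullet> z = 0" if "z \<in> M" for z
    proof -
      have "x + y - (orthogonal_projection M x + orthogonal_projection M y)
          = (x - orthogonal_projection M x) + (y - orthogonal_projection M y)"
        by simp
      then show ?thesis
        by (simp only: inner_add_left orthogonal_projection_orthogonal[OF that])
    qed
  qed
  show "orthogonal_projection M (r *\<^sub>R x) = r *\<^sub>R orthogonal_projection M x" for r x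
  proof (rule orthogonal_projection_unique)
    show "r *\<^sub>R orthogonal_projection M x \<in> M"
      using subspace_M orthogonal_projection_in by (simp add: subspace_scale)
    show "(r *\<^sub>R x - r *\<^sub>R orthogonal_projection M x) \<bullet> z = 0" if "z \<in> M" for z
      using orthogonal_projection_orthogonal[OF that, of x]
      by (simp add: inner_diff_left)
  qed
  show "norm (orthogonal_projection M x) \<le> norm x * 1" for x
    using norm_orthogonal_projection_le by simp
qed

lemma orthogonal_projection_symmetric:
  "orthogonal_projection M x \<bullet> y = x \<bullet> orthogonal_projection M y"
proof -
  have "orthogonal_projection M x \<bullet> (y - orthogonal_projection M y) = 0"
    using orthogonal_projection_orthogonal[OF orthogonal_projection_in, of y x] by (simp add: inner_commute)
  moreover have "(x - orthogonal_projection M x) \<bullet> orthogonal_projection M y = 0"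
    by (rule orthogonal_projection_orthogonal[OF orthogonal_projection_in])
  ultimately show ?thesis
    by (simp add: inner_diff_left inner_diff_right)
qed

end

section \<open>Riesz representation and adjoints\<close>

lemma closed_kernel:
  fixes f :: "'a::real_normed_vector \<Rightarrow> 'b::real_normed_vector"
  assumes "bounded_linear f"
  shows "closed {x. f x = 0}"
  using assms by (intro closed_Collect_eq) (auto intro: linear_continuous_on continuous_on_const)

lemma riesz_representation:
  fixes \<phi> :: "'a::{real_inner,complete_space} \<Rightarrow> real"
  assumes "bounded_linear \<phi>"
  obtains z where "\<And>x. \<phi> x = x \<bullet> z"
proof (cases "\<forall>x. \<phi> x = 0")
  case True
  then show ?thesis
    using that[of 0] by simp
next
  case False
  then obtain x0 where "\<phi> x0 \<noteq> 0"
    by blast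
  interpret bounded_linear \<phi>
    by (rule assms)
  define K where "K = {x. \<phi> x = 0}"
  have K: "subspace K" "closed K"
    unfolding K_def using closed_kernel[OF assms] by (auto simp: subspace_def add scale)
  \<comment> \<open>\<open>w\<close> is a nonzero vector orthogonal to the kernel, which has codimension one.\<close>
  define w where "w = x0 - orthogonal_projection K x0"
  have "\<phi> w = \<phi> x0"
    using orthogonal_projection_in[OF K, of x0] by (simp add: w_def K_def diff)
  then have "w \<bullet> w \<noteq> 0"
    using \<open>\<phi> x0 \<noteq> 0\<close> by (auto simp: zero)
  have "\<phi> x = x \<bullet> ((\<phi> w / (w \<bullet> w)) *\<^sub>R w)" for x
  proof -
    have "x - (\<phi> x / \<phi> w) *\<^sub>R w \<in> K"
      using \<open>\<phi> w = \<phi> x0\<close> \<open>\<phi> x0 \<noteq> 0\<close> by (simp add: K_def diff scale)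
    then have "w \<bullet> (x - (\<phi> x / \<phi> w) *\<^sub>R w) = 0"
      using orthogonal_projection_orthogonal[OF K] by (simp add: w_def)
    then have "x \<bullet> w = (\<phi> x / \<phi> w) * (w \<bullet> w)"
      by (simp add: inner_diff_right inner_commute)
    then show ?thesis
      using \<open>w \<bullet> w \<noteq> 0\<close> \<open>\<phi> w = \<phi> x0\<close> \<open>\<phi> x0 \<noteq> 0\<close> by (simp add: field_simps)
  qed
  then show ?thesis
    by (rule that)
qed

lemma bounded_linear_adjoint_works:
  fixes f :: "'a::{real_inner,complete_space} \<Rightarrow> 'b::real_inner"
  assumes "bounded_linear f"
  shows "f x \<bullet> y = x \<bullet> adjoint f y"
proof -
  have "\<forall>y. \<exists>z. \<forall>x. f x \<bullet> y = x \<bullet> z"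
  proof
    fix y
    obtain z where "\<And>x. f x \<bullet> y = x \<bullet> z"
      using riesz_representation[OF bounded_linear_compose[OF bounded_linear_inner_left assms]] by blast
    then show "\<exists>z. \<forall>x. f x \<bullet> y = x \<bullet> z"
      by blast
  qed
  then have "\<exists>g. \<forall>x y. f x \<bullet> y = x \<bullet> g y"
    by (metis choice)
  then show ?thesis
    unfolding adjoint_def by (rule someI2_ex) blast
qed

section \<open>Bounded preimages under operators with closed range\<close>

lemma subspace_range_linear: "linear f \<Longrightarrow> subspace (range f)"
  by (rule linear_subspace_image[OF _ subspace_UNIV])

lemma closed_Baire_cover:
  fixes Y :: "'a::complete_space set" and F :: "nat \<Rightarrow> 'a set"
  assumes "closed Y" "Y \<noteq> {}" "\<Union>(range F) = Y" "\<And>k. closedin (top_of_set Y) (F k)"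
  obtains k where "top_of_set Y interior_of F k \<noteq> {}"
proof (rule ccontr)
  assume "\<not> thesis"
  with that have "top_of_set Y interior_of F k = {}" for k
    by blast
  then have "top_of_set Y interior_of \<Union>(range F) = {}"
  proof (intro Baire_category_alt)
    show "completely_metrizable_space (top_of_set Y) \<or>
        locally_compact_space (top_of_set Y) \<and> regular_space (top_of_set Y)"
      using assms(1)
      by (metis completely_metrizable_space_closedin completely_metrizable_space_euclidean closed_closedin)
  qed (use assms(4) in auto)
  with assms(2,3) show False
    by (metis interior_of_topspace topspace_euclidean_subtopology)
qed

lemma closed_range_Baire:
  fixes f :: "'a::real_normed_vector \<Rightarrow> 'b::{real_normed_vector,complete_space}"
  assumes "bounded_linear f" "closed (range f)"
  shows "\<exists>y0\<in>range f. \<exists>r>0. \<exists>k::nat.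
    \<forall>y\<in>range f. dist y y0 < r \<longrightarrow> y \<in> closure (f ` ball 0 k)"
proof -
  define F where "F k = range f \<inter> closure (f ` ball 0 (real k))" for k
  have "\<Union>(range F) = range f"
  proof
    show "range f \<subseteq> \<Union>(range F)"
    proof
      fix y
      assume "y \<in> range f"
      then obtain x where "y = f x"
        by blast
      moreover obtain k :: nat where "norm x < k"
        using reals_Archimedean2 by blast
      ultimately have "y \<in> F k"
        unfolding F_def using closure_subset by fastforce
      then show "y \<in> \<Union>(range F)"
        by blast
    qed
  qed (auto simp: F_def)
  moreover have "closedin (top_of_set (range f)) (F k)" for k
    by (simp add: F_def closedin_closed_Int)
  ultimately obtain k where "top_of_set (range f) interior_of F k \<noteq> {}"
    using closed_Baire_cover[OF assms(2)] by blast
  then obtain y0 U where "openin (top_of_set (range f)) U" "y0 \<in> U" "U \<subseteq> F k"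
    unfolding interior_of_def by blast
  then obtain r where "r > 0" "\<And>y. y \<in> range f \<Longrightarrow> dist y y0 < r \<Longrightarrow> y \<in> U"
    unfolding openin_euclidean_subtopology_iff by (metis dist_commute)
  with \<open>y0 \<in> U\<close> \<open>U \<subseteq> F k\<close> show ?thesis
    unfolding F_def by blast
qed

lemma closed_range_approximate_preimage_near_0:
  fixes f :: "'a::real_normed_vector \<Rightarrow> 'b::{real_normed_vector,complete_space}"
  assumes "bounded_linear f" "closed (range f)"
  obtains r and k :: nat where "r > 0"
    "\<And>y e. y \<in> range f \<Longrightarrow> norm y < r \<Longrightarrow> e > 0 \<Longrightarrow> \<exists>x. norm x < 2 * k \<and> norm (f x - y) < e"
proof -
  interpret bounded_linear f
    by (rule assms(1))
  obtain y0 r and k :: nat where "y0 \<in> range f" "r > 0"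
    and near: "\<And>y. y \<in> range f \<Longrightarrow> dist y y0 < r \<Longrightarrow> y \<in> closure (f ` ball 0 k)"
    using closed_range_Baire[OF assms] by blast
  have "\<exists>x. norm x < 2 * k \<and> norm (f x - y) < e"
    if "y \<in> range f" "norm y < r" "e > 0" for y e
  proof -
    \<comment> \<open>Both \<open>y0 + y\<close> and \<open>y0\<close> are approximated by images of \<open>ball 0 k\<close>; subtract.\<close>
    have approach: "\<exists>x. norm x < k \<and> norm (f x - z) < e / 2" if "z \<in> closure (f ` ball 0 k)" for z
    proof -
      have "\<forall>\<epsilon>>0. \<exists>w\<in>f ` ball 0 k. dist w z < \<epsilon>"
        using that unfolding closure_approachable .
      then obtain w where "w \<in> f ` ball 0 k" "dist w z < e / 2"
        using half_gt_zero[OF \<open>e > 0\<close>] by blast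
      then show ?thesis
        by (auto simp: dist_norm)
    qed
    have "y0 + y \<in> range f"
      using subspace_range_linear[OF linear] \<open>y0 \<in> range f\<close> \<open>y \<in> range f\<close> by (rule subspace_add)
    then have "y0 + y \<in> closure (f ` ball 0 k)"
      using near \<open>norm y < r\<close> by (simp add: dist_norm)
    then obtain x1 where x1: "norm x1 < k" "norm (f x1 - (y0 + y)) < e / 2"
      using approach by blast
    have "y0 \<in> closure (f ` ball 0 k)"
      using near \<open>y0 \<in> range f\<close> \<open>r > 0\<close> by simp
    then obtain x2 where x2: "norm x2 < k" "norm (f x2 - y0) < e / 2"
      using approach by blast
    have "norm (x1 - x2) < 2 * k"
      using norm_triangle_ineq4[of x1 x2] x1(1) x2(1) by linarith
    moreover have "f (x1 - x2) - y = (f x1 - (y0 + y)) - (f x2 - y0)"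
      by (simp add: diff)
    then have "norm (f (x1 - x2) - y) \<le> norm (f x1 - (y0 + y)) + norm (f x2 - y0)"
      using norm_triangle_ineq4 by metis
    ultimately show ?thesis
      using x1(2) x2(2) by force
  qed
  with \<open>r > 0\<close> show ?thesis
    using that by blast
qed

lemma closed_range_approximate_preimage:
  fixes f :: "'a::real_normed_vector \<Rightarrow> 'b::{real_normed_vector,complete_space}"
  assumes "bounded_linear f" "closed (range f)"
  obtains M where "M \<ge> 0"
    "\<And>y e. y \<in> range f \<Longrightarrow> e > 0 \<Longrightarrow> \<exists>x. norm x \<le> M * norm y \<and> norm (f x - y) < e"
proof -
  interpret bounded_linear f
    by (rule assms(1))
  obtain r and k :: nat where "r > 0" and small:
    "\<And>y e. y \<in> range f \<Longrightarrow> norm y < r \<Longrightarrow> e > 0 \<Longrightarrow> \<exists>x. norm x < 2 * k \<and> norm (f x - y) < e"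
    using closed_range_approximate_preimage_near_0[OF assms] by blast
  have "\<exists>x. norm x \<le> 4 * k / r * norm y \<and> norm (f x - y) < e"
    if "y \<in> range f" "e > 0" for y e
  proof (cases "y = 0")
    case True
    then show ?thesis
      using \<open>e > 0\<close> by (intro exI[of _ 0]) (simp add: zero)
  next
    case False
    define s where "s = r / (2 * norm y)"
    have "s > 0"
      using False \<open>r > 0\<close> by (simp add: s_def)
    have "s *\<^sub>R y \<in> range f"
      using subspace_range_linear[OF linear] \<open>y \<in> range f\<close> by (rule subspace_scale)
    moreover have "norm (s *\<^sub>R y) < r"
      using False \<open>r > 0\<close> \<open>s > 0\<close> by (simp add: s_def)
    ultimately obtain x where x: "norm x < 2 * k" "norm (f x - s *\<^sub>R y) < e * s"
      using small \<open>e > 0\<close> \<open>s > 0\<close> by (meson mult_pos_pos)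
    have "norm ((1 / s) *\<^sub>R x) = norm x / s"
      using \<open>s > 0\<close> by simp
    also have "\<dots> \<le> 2 * k / s"
      using x(1) \<open>s > 0\<close> by (simp add: divide_right_mono)
    also have "\<dots> = 4 * k / r * norm y"
      using False \<open>r > 0\<close> by (simp add: s_def field_simps)
    finally have "norm ((1 / s) *\<^sub>R x) \<le> 4 * k / r * norm y" .
    moreover have "f ((1 / s) *\<^sub>R x) - y = (1 / s) *\<^sub>R (f x - s *\<^sub>R y)"
      using \<open>s > 0\<close> by (simp add: scale algebra_simps)
    then have "norm (f ((1 / s) *\<^sub>R x) - y) < e"
      using x(2) \<open>s > 0\<close> by (simp add: divide_less_eq)
    ultimately show ?thesis
      by blast
  qed
  moreover have "4 * k / r \<ge> 0"
    using \<open>r > 0\<close> by simp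
  ultimately show ?thesis
    using that by blast
qed

lemma preimage_from_halving_approximation:
  fixes f :: "'a::{real_normed_vector,complete_space} \<Rightarrow> 'b::real_normed_vector"
  assumes "bounded_linear f" "M \<ge> 0" "y \<in> range f"
    and approx: "\<And>z. z \<in> range f \<Longrightarrow> \<exists>x. norm x \<le> M * norm z \<and> norm (z - f x) \<le> norm z / 2"
  shows "\<exists>x. f x = y \<and> norm x \<le> 2 * M * norm y"
proof -
  interpret bounded_linear f
    by (rule assms(1))
  have "\<forall>z. \<exists>x. z \<in> range f \<longrightarrow> norm x \<le> M * norm z \<and> norm (z - f x) \<le> norm z / 2"
    using approx by blast
  from choice[OF this] obtain h
    where h: "\<And>z. z \<in> range f \<Longrightarrow> norm (h z) \<le> M * norm z \<and> norm (z - f (h z)) \<le> norm z / 2"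
    by blast
  \<comment> \<open>Successive corrections: \<open>ys j\<close> is the residual after \<open>j\<close> steps and halves at each step.\<close>
  define ys where "ys j = ((\<lambda>z. z - f (h z)) ^^ j) y" for j
  have ys_Suc: "ys (Suc j) = ys j - f (h (ys j))" for j
    by (simp add: ys_def)
  have ys_range: "ys j \<in> range f" for j
  proof (induction j)
    case 0
    then show ?case
      using \<open>y \<in> range f\<close> by (simp add: ys_def)
  next
    case (Suc j)
    then obtain a where "ys j = f a"
      by blast
    then have "ys (Suc j) = f (a - h (ys j))"
      by (simp add: ys_Suc diff)
    then show ?case
      by blast
  qed
  have ys_le: "norm (ys j) \<le> norm y * (1/2) ^ j" for j
  proof (induction j)
    case 0
    then show ?case
      by (simp add: ys_def)
  next
    case (Suc j)
    then show ?case
      using h[OF ys_range[of j]] by (simp add: ys_Suc)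
  qed
  define xs where "xs j = h (ys j)" for j
  have xs_le: "norm (xs j) \<le> M * norm y * (1/2) ^ j" for j
    using h[OF ys_range[of j]] mult_left_mono[OF ys_le[of j] \<open>M \<ge> 0\<close>]
    by (simp add: xs_def mult.assoc)
  have "ys \<longlonglongrightarrow> 0"
  proof (rule Lim_null_comparison)
    show "\<forall>\<^sub>F j in sequentially. norm (ys j) \<le> norm y * (1/2) ^ j"
      using ys_le by simp
    show "(\<lambda>j. norm y * (1/2::real) ^ j) \<longlonglongrightarrow> 0"
      by (intro tendsto_mult_right_zero LIMSEQ_power_zero) simp
  qed
  then have "(\<lambda>j. ys j - ys (Suc j)) sums y"
    using telescope_sums' by (fastforce simp: ys_def)
  then have "(\<lambda>j. f (xs j)) sums y"
    by (simp add: xs_def ys_Suc)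
  then have "f (suminf xs) = y"
    using suminf[OF summable_geometrically_bounded(1)[OF xs_le]] by (simp add: sums_iff)
  moreover have "norm (suminf xs) \<le> 2 * M * norm y"
    using summable_geometrically_bounded(2)[OF xs_le] by simp
  ultimately show ?thesis
    by blast
qed

lemma closed_range_bounded_preimage:
  fixes f :: "'a::{real_normed_vector,complete_space} \<Rightarrow> 'b::{real_normed_vector,complete_space}"
  assumes "bounded_linear f" "closed (range f)"
  obtains C where "C \<ge> 0" "\<And>y. y \<in> range f \<Longrightarrow> \<exists>x. f x = y \<and> norm x \<le> C * norm y"
proof -
  interpret bounded_linear f
    by (rule assms(1))
  obtain M where "M \<ge> 0"
    and approx: "\<And>y e. y \<in> range f \<Longrightarrow> e > 0 \<Longrightarrow> \<exists>x. norm x \<le> M * norm y \<and> norm (f x - y) < e"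
    using closed_range_approximate_preimage[OF assms] by blast
  have "\<exists>x. norm x \<le> M * norm z \<and> norm (z - f x) \<le> norm z / 2" if "z \<in> range f" for z
  proof (cases "z = 0")
    case True
    then show ?thesis
      by (intro exI[of _ 0]) (simp add: zero)
  next
    case False
    then show ?thesis
      using approx[OF that, of "norm z / 2"] by (auto simp: norm_minus_commute)
  qed
  then have "\<exists>x. f x = y \<and> norm x \<le> 2 * M * norm y" if "y \<in> range f" for y
    by (rule preimage_from_halving_approximation[OF assms(1) \<open>M \<ge> 0\<close> that])
  moreover have "2 * M \<ge> 0"
    using \<open>M \<ge> 0\<close> by simp
  ultimately show ?thesis
    using that by blast
qed

section \<open>The Moore-Penrose inverse\<close>

lemma subspace_kernel_op: "linear f \<Longrightarrow> subspace (kernel_op f)"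
  unfolding kernel_op_def by (rule linear_subspace_kernel)

lemma closed_kernel_op: "bounded_linear f \<Longrightarrow> closed (kernel_op f)"
  unfolding kernel_op_def by (rule closed_kernel)

context
  fixes T :: "'a::{real_inner,complete_space} \<Rightarrow> 'a"
  assumes bounded_linear_T: "bounded_linear T"
begin

interpretation T: bounded_linear T
  by (rule bounded_linear_T)

lemma subspace_closed_kernel_op: "subspace (kernel_op T)" "closed (kernel_op T)"
  using subspace_kernel_op[OF T.linear] closed_kernel_op[OF bounded_linear_T] by auto

lemma apply_diff_orthogonal_projection_kernel_op:
  "T (x - orthogonal_projection (kernel_op T) x) = T x"
  using orthogonal_projection_in[OF subspace_closed_kernel_op, of x] by (simp add: kernel_op_def T.diff)

lemma eq_if_apply_and_orthogonal_projection_kernel_op_eq: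
  assumes "T x = T x'" "orthogonal_projection (kernel_op T) x = orthogonal_projection (kernel_op T) x'"
  shows "x = x'"
proof -
  interpret P: bounded_linear "orthogonal_projection (kernel_op T)"
    by (rule bounded_linear_orthogonal_projection[OF subspace_closed_kernel_op])
  have "x - x' \<in> kernel_op T"
    using assms(1) by (simp add: kernel_op_def T.diff)
  then show ?thesis
    using orthogonal_projection_id[OF subspace_closed_kernel_op \<open>x - x' \<in> kernel_op T\<close>] assms(2)
    by (simp add: P.diff)
qed

lemma closed_range_generalized_inverse:
  assumes "closed (range T)"
  obtains S where "bounded_linear S"
    "\<And>y. T (S y) = orthogonal_projection (range T) y"
    "\<And>y. orthogonal_projection (kernel_op T) (S y) = 0"
    "\<And>x y. T x = orthogonal_projection (range T) y \<Longrightarrow> orthogonal_projection (kernel_op T) x = 0 \<Longrightarrow> S y = x"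
proof -
  define N where "N = kernel_op T"
  define P where "P = orthogonal_projection (range T)"
  have N: "subspace N" "closed N"
    unfolding N_def by (rule subspace_closed_kernel_op)+
  have R: "subspace (range T)" "closed (range T)"
    using subspace_range_linear[OF T.linear] assms by auto
  interpret P: bounded_linear P
    unfolding P_def by (rule bounded_linear_orthogonal_projection[OF R])
  interpret PN: bounded_linear "orthogonal_projection N"
    by (rule bounded_linear_orthogonal_projection[OF N])
  obtain C where "C \<ge> 0" and preimage: "\<And>y. y \<in> range T \<Longrightarrow> \<exists>x. T x = y \<and> norm x \<le> C * norm y"
    using closed_range_bounded_preimage[OF bounded_linear_T assms] by blast
  have "\<forall>y. \<exists>x. T x = P y \<and> norm x \<le> C * norm (P y)"
    using preimage orthogonal_projection_in[OF R] by (simp add: P_def)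
  from choice[OF this] obtain g where g: "\<And>y. T (g y) = P y \<and> norm (g y) \<le> C * norm (P y)"
    by blast
  \<comment> \<open>The preimages \<open>g y\<close> need not depend linearly on \<open>y\<close>; removing their kernel component
    makes them unique, and linearity of \<open>S\<close> follows from that uniqueness.\<close>
  define S where "S y = g y - orthogonal_projection N (g y)" for y
  have TS: "T (S y) = P y" for y
    using apply_diff_orthogonal_projection_kernel_op g by (simp add: S_def N_def)
  have PN_S: "orthogonal_projection N (S y) = 0" for y
    by (simp add: S_def orthogonal_projection_residual[OF N])
  have S_unique: "S y = x" if "T x = P y" "orthogonal_projection N x = 0" for x y
    by (rule eq_if_apply_and_orthogonal_projection_kernel_op_eq) (simp_all add: TS PN_S that N_def[symmetric])
  have "bounded_linear S"
  proof (rule bounded_linear_intro[where K=C])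
    show "S (a + b) = S a + S b" for a b
      by (rule S_unique) (simp_all add: T.add TS P.add PN.add PN_S)
    show "S (r *\<^sub>R a) = r *\<^sub>R S a" for r a
      by (rule S_unique) (simp_all add: T.scale TS P.scale PN.scale PN_S)
    show "norm (S y) \<le> norm y * C" for y
    proof -
      have "norm (S y) \<le> norm (g y)"
        unfolding S_def by (rule norm_orthogonal_projection_diff_le[OF N])
      also have "\<dots> \<le> C * norm (P y)"
        using g by blast
      also have "\<dots> \<le> C * norm y"
        using \<open>C \<ge> 0\<close> norm_orthogonal_projection_le[OF R] by (simp add: P_def mult_left_mono)
      finally show ?thesis
        by (simp add: mult.commute)
    qed
  qed
  then show ?thesis
    using that TS PN_S S_unique unfolding P_def N_def by blast
qed

end

lemma is_mp_inverse_exists: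
  fixes T :: "'a::{real_inner,complete_space} \<Rightarrow>\<^sub>L 'a"
  assumes "closed (range (blinfun_apply T))"
  shows "\<exists>S. is_mp_inverse T S"
proof -
  define N where "N = kernel_op (blinfun_apply T)"
  define P where "P = orthogonal_projection (range (blinfun_apply T))"
  obtain S where S: "bounded_linear S" and TS: "\<And>y. T (S y) = P y"
    and PN_S: "\<And>y. orthogonal_projection N (S y) = 0"
    and S_unique: "\<And>x y. T x = P y \<Longrightarrow> orthogonal_projection N x = 0 \<Longrightarrow> S y = x"
    using closed_range_generalized_inverse[OF blinfun.bounded_linear_right assms]
    unfolding N_def P_def by blast
  have N: "subspace N" "closed N"
    unfolding N_def by (rule subspace_closed_kernel_op[OF blinfun.bounded_linear_right])+
  have R: "subspace (range (blinfun_apply T))" "closed (range (blinfun_apply T))"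
    using subspace_range_linear[OF bounded_linear.linear[OF blinfun.bounded_linear_right]] assms by auto
  have PT: "P (T x) = T x" for x
    by (simp add: P_def orthogonal_projection_id[OF R])
  have ST: "S (T x) = x - orthogonal_projection N x" for x
    by (rule S_unique)
      (simp_all add: PT N_def apply_diff_orthogonal_projection_kernel_op[OF blinfun.bounded_linear_right]
        orthogonal_projection_residual[OF N[unfolded N_def]])
  have STS: "S (T (S y)) = S y" for y
    by (rule S_unique) (simp_all add: PT PN_S)
  define S' where "S' = Blinfun S"
  have S'_apply: "blinfun_apply S' = S"
    unfolding S'_def by (rule bounded_linear_Blinfun_apply[OF S])
  have "is_mp_inverse T S'"
    unfolding is_mp_inverse_def
  proof (intro conjI)
    show "T o\<^sub>L S' o\<^sub>L T = T"
      by (rule blinfun_eqI) (simp add: S'_apply TS PT)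
    show "S' o\<^sub>L T o\<^sub>L S' = S'"
      by (rule blinfun_eqI) (simp add: S'_apply STS)
    show "adjoint (blinfun_apply (S' o\<^sub>L T)) = blinfun_apply (S' o\<^sub>L T)"
      by (rule adjoint_unique)
        (simp add: S'_apply ST inner_diff_left inner_diff_right orthogonal_projection_symmetric[OF N])
    show "adjoint (blinfun_apply (T o\<^sub>L S')) = blinfun_apply (T o\<^sub>L S')"
      by (rule adjoint_unique) (simp add: S'_apply TS P_def orthogonal_projection_symmetric[OF R])
  qed
  then show ?thesis
    by blast
qed

lemma is_mp_inverseD:
  fixes T S :: "'a::{real_inner,complete_space} \<Rightarrow>\<^sub>L 'a"
  assumes "is_mp_inverse T S"
  shows "T (S (T x)) = T x" and "S (T (S x)) = S x"
    and "S (T x) \<bullet> y = x \<bullet> S (T y)" and "T (S x) \<bullet> y = x \<bullet> T (S y)"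
proof -
  have TST: "T o\<^sub>L S o\<^sub>L T = T" and STS: "S o\<^sub>L T o\<^sub>L S = S"
    and ST: "adjoint (blinfun_apply (S o\<^sub>L T)) = blinfun_apply (S o\<^sub>L T)"
    and TS: "adjoint (blinfun_apply (T o\<^sub>L S)) = blinfun_apply (T o\<^sub>L S)"
    using assms unfolding is_mp_inverse_def by blast+
  show "T (S (T x)) = T x"
    using arg_cong[OF TST, of "\<lambda>A. blinfun_apply A x"] by simp
  show "S (T (S x)) = S x"
    using arg_cong[OF STS, of "\<lambda>A. blinfun_apply A x"] by simp
  show "S (T x) \<bullet> y = x \<bullet> S (T y)"
    using bounded_linear_adjoint_works[OF blinfun.bounded_linear_right[of "S o\<^sub>L T"], of x y]
    unfolding ST by simp
  show "T (S x) \<bullet> y = x \<bullet> T (S y)"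
    using bounded_linear_adjoint_works[OF blinfun.bounded_linear_right[of "T o\<^sub>L S"], of x y]
    unfolding TS by simp
qed

lemma is_mp_inverse_apply_T_eq:
  fixes T S1 S2 :: "'a::{real_inner,complete_space} \<Rightarrow>\<^sub>L 'a"
  assumes "is_mp_inverse T S1" "is_mp_inverse T S2"
  shows "S1 (T x) = S2 (T x)"
proof -
  note S1 = is_mp_inverseD[OF assms(1)] and S2 = is_mp_inverseD[OF assms(2)]
  have "S1 (T x) \<bullet> y = S2 (T x) \<bullet> y" for y
  proof -
    have "S1 (T x) \<bullet> y = S1 (T (S2 (T x))) \<bullet> y"
      by (simp add: S2(1))
    also have "\<dots> = S2 (T x) \<bullet> S1 (T y)"
      by (rule S1(3))
    also have "\<dots> = S2 (T (S2 (T x))) \<bullet> S1 (T y)"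
      by (simp add: S2(1))
    also have "\<dots> = S2 (T x) \<bullet> S2 (T (S1 (T y)))"
      by (rule S2(3))
    also have "\<dots> = S2 (T x) \<bullet> y"
      by (simp add: S1(1) S2(1) S2(3))
    finally show ?thesis .
  qed
  then show ?thesis
    using vector_eq_rdot by blast
qed

lemma is_mp_inverse_T_apply_eq:
  fixes T S1 S2 :: "'a::{real_inner,complete_space} \<Rightarrow>\<^sub>L 'a"
  assumes "is_mp_inverse T S1" "is_mp_inverse T S2"
  shows "T (S1 x) = T (S2 x)"
proof -
  note S1 = is_mp_inverseD[OF assms(1)] and S2 = is_mp_inverseD[OF assms(2)]
  have "T (S1 x) \<bullet> y = T (S2 x) \<bullet> y" for y
  proof -
    have "T (S1 x) \<bullet> y = T (S2 (T (S1 x))) \<bullet> y"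
      by (simp add: S2(1))
    also have "\<dots> = T (S1 x) \<bullet> T (S2 y)"
      by (rule S2(4))
    also have "\<dots> = x \<bullet> T (S1 (T (S2 y)))"
      by (rule S1(4))
    also have "\<dots> = T (S2 x) \<bullet> y"
      by (simp add: S1(1) S2(4))
    finally show ?thesis .
  qed
  then show ?thesis
    using vector_eq_rdot by blast
qed

lemma is_mp_inverse_unique:
  fixes T S1 S2 :: "'a::{real_inner,complete_space} \<Rightarrow>\<^sub>L 'a"
  assumes "is_mp_inverse T S1" "is_mp_inverse T S2"
  shows "S1 = S2"
proof (rule blinfun_eqI)
  fix x
  have "S1 x = S1 (T (S1 x))"
    by (simp add: is_mp_inverseD(2)[OF assms(1)])
  also have "\<dots> = S2 (T (S2 x))"
    by (simp add: is_mp_inverse_apply_T_eq[OF assms] is_mp_inverse_T_apply_eq[OF assms])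
  also have "\<dots> = S2 x"
    by (rule is_mp_inverseD(2)[OF assms(2)])
  finally show "S1 x = S2 x" .
qed

lemma is_mp_inverse_mp_inverse:
  fixes T :: "'a::{real_inner,complete_space} \<Rightarrow>\<^sub>L 'a"
  assumes "closed (range (blinfun_apply T))"
  shows "is_mp_inverse T (mp_inverse T)"
proof -
  obtain S where "is_mp_inverse T S"
    using is_mp_inverse_exists[OF assms] by blast
  then show ?thesis
    unfolding mp_inverse_def by (rule theI) (rule is_mp_inverse_unique[OF _ \<open>is_mp_inverse T S\<close>])
qed

section \<open>Ascent and descent\<close>

lemma kernel_op_funpow_Suc_eq:
  fixes f g :: "'a::real_normed_vector \<Rightarrow> 'a"
  assumes "f 0 = 0" "g 0 = 0" "\<And>x. f (g (f x)) = f x" "\<And>x. (f ^^ n) (g x) = g ((f ^^ n) x)" "n > 0"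
  shows "kernel_op (f ^^ Suc n) = kernel_op (f ^^ n)"
proof -
  obtain m where n: "n = Suc m"
    using \<open>n > 0\<close> gr0_implies_Suc by blast
  have "(f ^^ n) x = 0" if "(f ^^ Suc n) x = 0" for x
  proof -
    have "(f ^^ n) x = (f ^^ m) (f x)"
      by (simp only: n funpow_Suc_right comp_apply)
    also have "\<dots> = (f ^^ m) (f (g (f x)))"
      by (simp only: assms(3))
    also have "\<dots> = (f ^^ n) (g (f x))"
      by (simp only: n funpow_Suc_right comp_apply)
    also have "\<dots> = g ((f ^^ n) (f x))"
      by (rule assms(4))
    also have "\<dots> = g ((f ^^ Suc n) x)"
      by (simp only: funpow_Suc_right comp_apply)
    finally show ?thesis
      using that assms(2) by simp
  qed
  moreover have "(f ^^ Suc n) x = 0" if "(f ^^ n) x = 0" for x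
    using that assms(1) by simp
  ultimately show ?thesis
    unfolding kernel_op_def by blast
qed

lemma range_funpow_Suc_eq:
  assumes "\<And>x. f (g (f x)) = f x" "\<And>x. (f ^^ n) (g x) = g ((f ^^ n) x)" "n > 0"
  shows "range (f ^^ Suc n) = range (f ^^ n)"
proof
  show "range (f ^^ Suc n) \<subseteq> range (f ^^ n)"
    by (simp only: funpow_Suc_right image_comp[symmetric] image_subset_iff) blast
  show "range (f ^^ n) \<subseteq> range (f ^^ Suc n)"
  proof
    fix y
    assume "y \<in> range (f ^^ n)"
    then obtain x where y: "y = (f ^^ n) x"
      by blast
    obtain m where n: "n = Suc m"
      using \<open>n > 0\<close> gr0_implies_Suc by blast
    have "(f ^^ Suc n) (g x) = f (g ((f ^^ n) x))"
      by (simp only: funpow.simps(2) comp_apply assms(2))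
    also have "\<dots> = f (g (f ((f ^^ m) x)))"
      by (simp only: n funpow.simps(2) comp_apply)
    also have "\<dots> = y"
      by (simp only: assms(1) y n funpow.simps(2) comp_apply)
    finally show "y \<in> range (f ^^ Suc n)"
      by (metis rangeI)
  qed
qed

lemma ascent_le:
  fixes T :: "'a::real_normed_vector \<Rightarrow>\<^sub>L 'a"
  assumes "kernel_op (op_pow T k) = kernel_op (op_pow T (Suc k))"
  shows "ascent T \<le> enat k"
proof -
  have "\<exists>j. kernel_op (op_pow T j) = kernel_op (op_pow T (Suc j))"
    using assms by blast
  then show ?thesis
    unfolding ascent_def
    using Least_le[of "\<lambda>j. kernel_op (op_pow T j) = kernel_op (op_pow T (Suc j))", OF assms] by simp
qed

lemma descent_le:
  fixes T :: "'a::real_normed_vector \<Rightarrow>\<^sub>L 'a"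
  assumes "range (op_pow T k) = range (op_pow T (Suc k))"
  shows "descent T \<le> enat k"
proof -
  have "\<exists>j. range (op_pow T j) = range (op_pow T (Suc j))"
    using assms by blast
  then show ?thesis
    unfolding descent_def
    using Least_le[of "\<lambda>j. range (op_pow T j) = range (op_pow T (Suc j))", OF assms] by simp
qed

theorem mainTheorem19:
  fixes T :: "'a::{real_inner, complete_space} \<Rightarrow>\<^sub>L 'a" and n :: nat
  assumes "n \<ge> 1" and "n_EP n T"
  shows "ascent T \<noteq> \<infinity> \<and> descent T \<noteq> \<infinity> \<and> ascent T \<le> enat n \<and> descent T \<le> enat n"
proof -
  have closed: "closed (range (blinfun_apply T))"
    and commute: "op_pow T n \<circ> blinfun_apply (mp_inverse T) = blinfun_apply (mp_inverse T) \<circ> op_pow T n"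
    using assms(2) unfolding n_EP_def by blast+
  let ?S = "blinfun_apply (mp_inverse T)"
  have TST: "T (?S (T x)) = T x" for x
    by (rule is_mp_inverseD(1)[OF is_mp_inverse_mp_inverse[OF closed]])
  have commute': "(blinfun_apply T ^^ n) (?S x) = ?S ((blinfun_apply T ^^ n) x)" for x
    using fun_cong[OF commute, of x] by (simp add: op_pow_def)
  have "n > 0"
    using assms(1) by simp
  have "kernel_op (op_pow T (Suc n)) = kernel_op (op_pow T n)"
    unfolding op_pow_def
    by (rule kernel_op_funpow_Suc_eq[OF blinfun.zero_right blinfun.zero_right TST commute' \<open>n > 0\<close>])
  then have "ascent T \<le> enat n"
    by (rule ascent_le[OF sym])
  have "range (op_pow T (Suc n)) = range (op_pow T n)"
    unfolding op_pow_def by (rule range_funpow_Suc_eq[OF TST commute' \<open>n > 0\<close>])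
  then have "descent T \<le> enat n"
    by (rule descent_le[OF sym])
  with \<open>ascent T \<le> enat n\<close> show ?thesis
    by (auto dest: enat_ile)
qed

end
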